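(* Let $\mathcal{H}$ be an infinite dimensional complex Hilbert space and let $\phi:\mathcal{B}(\mathcal{H})\to\mathcal{B}(\mathcal{H})$ be a bijective map preserving the Douglas solution in both directions. Then for every $B\in\mathcal{B}(\mathcal{H})$: $\ker B=\{0\}$ if and only if $\ker\phi(B)=\{0\}$.
   Context: $\mathcal{B}(\mathcal{H})$ denotes the algebra of all bounded linear operators on $\mathcal{H}$. For $A,B\in\mathcal{B}(\mathcal{H})$ with $\operatorname{ran}A\subseteq\operatorname{ran}B$, the Douglas solution of $A=BX$ is the unique $D\in\mathcal{B}(\mathcal{H})$ with $BD=A$ and $\operatorname{ran}D\subseteq(\ker B)^\perp$. A map $\phi:\mathcal{B}(\mathcal{H})\to\mathcal{B}(\mathcal{H})$ preserves the Douglas solution in both directions if for all $A,B,X\in\mathcal{B}(\mathcal{H})$: $X$ is the Douglas solution of $A=BX$ if and only if $\phi(X)$ is the Douglas solution of $\phi(A)=\phi(B)Y$. *)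

theory Defs
  imports "HOL-Analysis.Analysis"
begin

text \<open>A complex Hilbert space is encoded as a real Hilbert space (type class
  real_inner + complete_space) together with a complex structure J: a bounded
  real-linear map with J (J x) = - x which is orthogonal.  Scalar multiplication by
  the imaginary unit i is x \<mapsto> J x.\<close>

definition complex_structure :: "('a::{real_inner,complete_space} \<Rightarrow>\<^sub>L 'a) \<Rightarrow> bool" where
  "complex_structure J \<longleftrightarrow>
     (\<forall>x. blinfun_apply J (blinfun_apply J x) = - x) \<and> (\<forall>x y. inner (blinfun_apply J x) (blinfun_apply J y) = inner x y)"

definition cinner :: "('a::{real_inner,complete_space} \<Rightarrow>\<^sub>L 'a) \<Rightarrow> 'a \<Rightarrow> 'a \<Rightarrow> complex" where
  "cinner J x y = Complex (inner x y) (inner (blinfun_apply J x) y)"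

definition cspan :: "('a::{real_inner,complete_space} \<Rightarrow>\<^sub>L 'a) \<Rightarrow> 'a set \<Rightarrow> 'a set" where
  "cspan J S = span (S \<union> blinfun_apply J ` S)"

definition infinite_dimensional :: "('a::{real_inner,complete_space} \<Rightarrow>\<^sub>L 'a) \<Rightarrow> bool" where
  "infinite_dimensional J \<longleftrightarrow> \<not> (\<exists>S. finite S \<and> cspan J S = UNIV)"

text \<open>B(H): bounded complex-linear operators = bounded real-linear ones commuting with J.\<close>
definition BH :: "('a::{real_inner,complete_space} \<Rightarrow>\<^sub>L 'a) \<Rightarrow> ('a \<Rightarrow>\<^sub>L 'a) set" where
  "BH J = {T. \<forall>x. blinfun_apply T (blinfun_apply J x) = blinfun_apply J (blinfun_apply T x)}"

definition ker_op :: "('a::real_normed_vector \<Rightarrow>\<^sub>L 'a) \<Rightarrow> 'a set" where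
  "ker_op T = {x. blinfun_apply T x = 0}"

definition ran_op :: "('a::real_normed_vector \<Rightarrow>\<^sub>L 'a) \<Rightarrow> 'a set" where
  "ran_op T = range (blinfun_apply T)"

definition corth :: "('a::{real_inner,complete_space} \<Rightarrow>\<^sub>L 'a) \<Rightarrow> 'a set \<Rightarrow> 'a set" where
  "corth J M = {y. \<forall>x\<in>M. cinner J x y = 0}"

definition douglas_solution ::
  "('a::{real_inner,complete_space} \<Rightarrow>\<^sub>L 'a) \<Rightarrow> ('a \<Rightarrow>\<^sub>L 'a) \<Rightarrow> ('a \<Rightarrow>\<^sub>L 'a) \<Rightarrow> ('a \<Rightarrow>\<^sub>L 'a) \<Rightarrow> bool"
  where
  "douglas_solution J A B X \<longleftrightarrow>
     ran_op A \<subseteq> ran_op B \<and> B o\<^sub>L X = A \<and> ran_op X \<subseteq> corth J (ker_op B)"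

end

theory Submission
  imports Defs
begin

text \<open>An operator B is injective exactly when every X is the Douglas solution of some
  equation A = B X: if ker B = 0 take A = B X, and conversely X = I makes
  every vector orthogonal to ker B, in particular every vector of ker B to itself.
  This characterisation is phrased purely in terms of the Douglas-solution relation on B(H),
  so a bijection of B(H) preserving that relation in both directions preserves it.\<close>

lemma corth_zero [simp]: "corth J {0} = UNIV"
  unfolding corth_def cinner_def by (simp add: complex_eq_iff)

lemma self_corth_eq_zero:
  assumes "x \<in> M" and "x \<in> corth J M"
  shows "x = 0"
proof -
  have "cinner J x x = 0" using assms unfolding corth_def by blast
  then have "inner x x = 0" unfolding cinner_def by (simp add: complex_eq_iff)
  then show ?thesis by simp
qed

lemma id_blinfun_in_BH: "id_blinfun \<in> BH J"
  unfolding BH_def by simp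

lemma blinfun_compose_in_BH: "B \<in> BH J \<Longrightarrow> X \<in> BH J \<Longrightarrow> B o\<^sub>L X \<in> BH J"
  unfolding BH_def by simp

lemma ker_op_eq_zero_iff_douglas_solvable:
  assumes B: "B \<in> BH J"
  shows "ker_op B = {0} \<longleftrightarrow> (\<forall>X\<in>BH J. \<exists>A\<in>BH J. douglas_solution J A B X)"
proof
  assume "ker_op B = {0}"
  then have "douglas_solution J (B o\<^sub>L X) B X" for X
    unfolding douglas_solution_def ran_op_def by auto
  then show "\<forall>X\<in>BH J. \<exists>A\<in>BH J. douglas_solution J A B X"
    using B blinfun_compose_in_BH by blast
next
  assume "\<forall>X\<in>BH J. \<exists>A\<in>BH J. douglas_solution J A B X"
  then obtain A where "douglas_solution J A B id_blinfun"
    using id_blinfun_in_BH by blast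
  then have "UNIV \<subseteq> corth J (ker_op B)"
    unfolding douglas_solution_def ran_op_def by simp
  then have "ker_op B \<subseteq> {0}"
    using self_corth_eq_zero by blast
  moreover have "0 \<in> ker_op B"
    unfolding ker_op_def by simp
  ultimately show "ker_op B = {0}" by blast
qed

lemma bij_preserving_relation_preserves_solvability:
  assumes "bij_betw \<phi> S S"
    and "\<forall>A\<in>S. \<forall>B\<in>S. \<forall>X\<in>S. R A B X \<longleftrightarrow> R (\<phi> A) (\<phi> B) (\<phi> X)"
    and "B \<in> S"
  shows "(\<forall>X\<in>S. \<exists>A\<in>S. R A B X) \<longleftrightarrow> (\<forall>Y\<in>S. \<exists>C\<in>S. R C (\<phi> B) Y)"
proof -
  have image: "\<phi> ` S = S" using assms(1) by (simp add: bij_betw_def)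
  have "(\<forall>X\<in>S. \<exists>A\<in>S. R A B X) \<longleftrightarrow> (\<forall>X\<in>S. \<exists>A\<in>S. R (\<phi> A) (\<phi> B) (\<phi> X))"
    using assms(2,3) by blast
  also have "\<dots> \<longleftrightarrow> (\<forall>Y\<in>\<phi> ` S. \<exists>C\<in>\<phi> ` S. R C (\<phi> B) Y)"
    by blast
  finally show ?thesis by (simp only: image)
qed

theorem claim2:
  fixes J :: "'a::{real_inner,complete_space} \<Rightarrow>\<^sub>L 'a"
    and \<phi> :: "('a \<Rightarrow>\<^sub>L 'a) \<Rightarrow> ('a \<Rightarrow>\<^sub>L 'a)"
  assumes "complex_structure J"
    and "infinite_dimensional J"
    and "bij_betw \<phi> (BH J) (BH J)"
    and "\<forall>A\<in>BH J. \<forall>B\<in>BH J. \<forall>X\<in>BH J.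
           douglas_solution J A B X \<longleftrightarrow> douglas_solution J (\<phi> A) (\<phi> B) (\<phi> X)"
  shows "\<forall>B\<in>BH J. ker_op B = {0} \<longleftrightarrow> ker_op (\<phi> B) = {0}"
proof
  fix B assume B: "B \<in> BH J"
  have "\<phi> B \<in> BH J" using assms(3) B by (meson bij_betwE)
  then show "ker_op B = {0} \<longleftrightarrow> ker_op (\<phi> B) = {0}"
    using ker_op_eq_zero_iff_douglas_solvable[OF B]
      ker_op_eq_zero_iff_douglas_solvable[of "\<phi> B"]
      bij_preserving_relation_preserves_solvability[OF assms(3,4) B]
    by simp
qed

end
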